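(* Let $A$ be a Boolean algebra and $g\colon A^2\to A$ a binary sufficiency operator satisfying (ABTW): for all $a\in A$, $a\neq0\Rightarrow g(a,a)\leq a$. Let $a,b\in A$. If $g(a,b)\neq0$, then $a\cdot b\leq g(a,b)$. If, additionally, $a\cdot b\neq0$, then $g(a,b)=a\cdot b$ and $a\cdot b$ is an atom of $A$.
   Context: $A$ is a Boolean algebra with at least two elements (operations $+,\cdot,-,0,1$). A binary sufficiency operator is a map $g\colon A^2\to A$ with $g(x,y)=1$ whenever $x=0$ or $y=0$, and co-additive in each argument: $g(x+x',y)=g(x,y)\cdot g(x',y)$ and $g(x,y+y')=g(x,y)\cdot g(x,y')$ (hence $g$ is antitone in each argument). *)

theory Defs
  imports Main
begin

text \<open>Boolean algebra: type class boolean_algebra, with + = sup, \<cdot> = inf, - = complement,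
  0 = bot, 1 = top.\<close>

definition sufficiency_op2 :: "('a::boolean_algebra \<Rightarrow> 'a \<Rightarrow> 'a) \<Rightarrow> bool" where
  "sufficiency_op2 g \<longleftrightarrow>
     (\<forall>x y. (x = bot \<or> y = bot) \<longrightarrow> g x y = top) \<and>
     (\<forall>x x' y. g (sup x x') y = inf (g x y) (g x' y)) \<and>
     (\<forall>x y y'. g x (sup y y') = inf (g x y) (g x y'))"

definition is_atom :: "'a::boolean_algebra \<Rightarrow> bool" where
  "is_atom a \<longleftrightarrow> a \<noteq> bot \<and> (\<forall>x. x \<le> a \<longrightarrow> x = bot \<or> x = a)"

end

theory Submission
  imports Defs
begin

text \<open>
  Antitonicity gives \<open>g a b \<le> g d d\<close> for every common lower bound \<open>d\<close> of \<open>a\<close> and \<open>b\<close>,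
  and (ABTW) turns this into \<open>g a b \<le> d\<close> whenever \<open>d \<noteq> 0\<close>. Taking \<open>d = a \<cdot> b \<cdot> -g a b\<close>
  shows that \<open>d = 0\<close> unless \<open>g a b = 0\<close>, i.e. \<open>a \<cdot> b \<le> g a b\<close>. Taking \<open>d = a \<cdot> b\<close> gives
  the reverse inequality, and taking for \<open>d\<close> any nonzero element below \<open>a \<cdot> b\<close> shows that
  \<open>a \<cdot> b\<close> is an atom.
\<close>

lemma sufficiency_op2_antimono_left:
  assumes "sufficiency_op2 g" and "x \<le> x'"
  shows "g x' y \<le> g x y"
proof -
  have "g x' y = g (sup x x') y" using \<open>x \<le> x'\<close> by (simp add: sup_absorb2)
  also have "\<dots> = inf (g x y) (g x' y)" using assms(1) unfolding sufficiency_op2_def by blast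
  finally show ?thesis by (simp add: le_iff_inf inf_commute)
qed

lemma sufficiency_op2_antimono_right:
  assumes "sufficiency_op2 g" and "y \<le> y'"
  shows "g x y' \<le> g x y"
proof -
  have "g x y' = g x (sup y y')" using \<open>y \<le> y'\<close> by (simp add: sup_absorb2)
  also have "\<dots> = inf (g x y) (g x y')" using assms(1) unfolding sufficiency_op2_def by blast
  finally show ?thesis by (simp add: le_iff_inf inf_commute)
qed

lemma sufficiency_op2_antimono:
  assumes "sufficiency_op2 g" and "x \<le> x'" and "y \<le> y'"
  shows "g x' y' \<le> g x y"
  using sufficiency_op2_antimono_left[OF assms(1,2)] sufficiency_op2_antimono_right[OF assms(1,3)]
  by (rule order_trans)

lemma sufficiency_op2_le_nonzero_lower_bound:
  assumes suff: "sufficiency_op2 g"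
    and ABTW: "\<And>x. x \<noteq> bot \<Longrightarrow> g x x \<le> x"
    and "d \<noteq> bot" and "d \<le> inf a b"
  shows "g a b \<le> d"
proof -
  have "g a b \<le> g d d"
    using sufficiency_op2_antimono[OF suff] \<open>d \<le> inf a b\<close> by simp
  also have "\<dots> \<le> d" using ABTW \<open>d \<noteq> bot\<close> .
  finally show ?thesis .
qed

lemma sufficiency_op2_inf_le:
  assumes suff: "sufficiency_op2 g"
    and ABTW: "\<And>x. x \<noteq> bot \<Longrightarrow> g x x \<le> x"
    and "g a b \<noteq> bot"
  shows "inf a b \<le> g a b"
proof (rule ccontr)
  assume "\<not> inf a b \<le> g a b"
  then have "inf a b - g a b \<noteq> bot" by simp
  moreover have "inf a b - g a b \<le> inf a b" by (simp add: diff_eq inf.coboundedI1)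
  ultimately have "g a b \<le> inf a b - g a b"
    using sufficiency_op2_le_nonzero_lower_bound[OF suff ABTW] by blast
  then have "g a b \<le> - g a b" by (simp add: diff_eq)
  with \<open>g a b \<noteq> bot\<close> show False by (simp add: inf_absorb1 flip: inf_shunt)
qed

theorem theorem32:
  fixes g :: "'a::boolean_algebra \<Rightarrow> 'a \<Rightarrow> 'a" and a b :: 'a
  assumes nontriv: "(bot::'a) \<noteq> top"
    and suff: "sufficiency_op2 g"
    and ABTW: "\<forall>x. x \<noteq> bot \<longrightarrow> g x x \<le> x"
    and gab: "g a b \<noteq> bot"
  shows "inf a b \<le> g a b \<and>
         (inf a b \<noteq> bot \<longrightarrow> g a b = inf a b \<and> is_atom (inf a b))"
proof -
  have ABTW': "\<And>x. x \<noteq> bot \<Longrightarrow> g x x \<le> x" using ABTW by blast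
  have le: "inf a b \<le> g a b" using sufficiency_op2_inf_le[OF suff ABTW' gab] .
  moreover have "g a b = inf a b \<and> is_atom (inf a b)" if "inf a b \<noteq> bot"
  proof -
    have below: "g a b \<le> d" if "d \<noteq> bot" "d \<le> inf a b" for d
      using sufficiency_op2_le_nonzero_lower_bound[OF suff ABTW' that] .
    have eq: "g a b = inf a b" using below[OF \<open>inf a b \<noteq> bot\<close> order.refl] le
      by (rule order.antisym)
    have "d = bot \<or> d = inf a b" if "d \<le> inf a b" for d
      using below[of d] eq that by auto
    then show ?thesis using eq \<open>inf a b \<noteq> bot\<close> unfolding is_atom_def by blast
  qed
  ultimately show ?thesis by blast
qed

end
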